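(* Let $G\in\mathcal{C}$ and let $C$ be a minimal separator of $G$ that is not a clique. Then $G\setminus C$ has exactly two full components for $C$.
   Context: All graphs are finite and simple; paths are induced paths; a hole is an induced cycle of length at least four. $\mathcal{C}$ is the class of graphs containing no theta, pyramid, prism or turtle as an induced subgraph, where: a theta consists of two nonadjacent vertices $a,b$ and three paths from $a$ to $b$, otherwise vertex-disjoint, any two of which induce a hole; a pyramid consists of a vertex $a$, a triangle $\{b_1,b_2,b_3\}$ and paths $P_i$ from $a$ to $b_i$, pairwise disjoint except at $a$, any two of which induce a hole; a prism consists of two disjoint triangles $\{a_1,a_2,a_3\},\{b_1,b_2,b_3\}$ and pairwise disjoint paths $P_i$ from $a_i$ to $b_i$, any two of which induce a hole; a turtle consists of disjoint paths $P_1$ (from $a_1$ to $b_1$), $P_2$ (from $a_2$ to $b_2$) with $a_1a_2,b_1b_2$ edges and $V(P_1)\cup V(P_2)$ inducing a hole, plus adjacent vertices $x,y$ where $x$ has at least three neighbors in $P_1$ and none in $P_2$, and $y$ has at least three neighbors in $P_2$ and none in $P_1$. A set $C\subseteq V(G)$ is a minimal separator of $G$ if there are two distinct connected components $L,R$ of $G\setminus C$ with $N(L)=N(R)=C$, where $N(X)$ is the set of vertices outside $X$ with a neighbor in $X$. A connected component $D$ of $G\setminus C$ is a full component for $C$ if $N(D)=C$. *)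

theory Defs
  imports Main
begin

definition graph :: "'a set \<Rightarrow> ('a \<Rightarrow> 'a \<Rightarrow> bool) \<Rightarrow> bool" where
  "graph V E \<longleftrightarrow> finite V \<and> (\<forall>u v. E u v \<longrightarrow> u \<in> V \<and> v \<in> V)
     \<and> (\<forall>u v. E u v \<longrightarrow> E v u) \<and> (\<forall>u. \<not> E u u)"

definition ind_path :: "'a set \<Rightarrow> ('a \<Rightarrow> 'a \<Rightarrow> bool) \<Rightarrow> 'a list \<Rightarrow> 'a \<Rightarrow> 'a \<Rightarrow> bool" where
  "ind_path V E p a b \<longleftrightarrow> p \<noteq> [] \<and> distinct p \<and> set p \<subseteq> V \<and> hd p = a \<and> last p = b
     \<and> (\<forall>i<length p. \<forall>j<length p. E (p ! i) (p ! j) \<longleftrightarrow> (j = i + 1 \<or> i = j + 1))"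

definition is_hole :: "'a set \<Rightarrow> ('a \<Rightarrow> 'a \<Rightarrow> bool) \<Rightarrow> 'a set \<Rightarrow> bool" where
  "is_hole V E H \<longleftrightarrow> (\<exists>c. distinct c \<and> set c = H \<and> H \<subseteq> V \<and> length c \<ge> 4
     \<and> (\<forall>i<length c. \<forall>j<length c.
          E (c ! i) (c ! j) \<longleftrightarrow> (j = (i + 1) mod length c \<or> i = (j + 1) mod length c)))"

definition has_theta :: "'a set \<Rightarrow> ('a \<Rightarrow> 'a \<Rightarrow> bool) \<Rightarrow> bool" where
  "has_theta V E \<longleftrightarrow> (\<exists>a b P1 P2 P3. a \<noteq> b \<and> \<not> E a b
     \<and> ind_path V E P1 a b \<and> ind_path V E P2 a b \<and> ind_path V E P3 a b
     \<and> set P1 \<inter> set P2 = {a, b} \<and> set P1 \<inter> set P3 = {a, b} \<and> set P2 \<inter> set P3 = {a, b}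
     \<and> is_hole V E (set P1 \<union> set P2) \<and> is_hole V E (set P1 \<union> set P3)
     \<and> is_hole V E (set P2 \<union> set P3))"

definition has_pyramid :: "'a set \<Rightarrow> ('a \<Rightarrow> 'a \<Rightarrow> bool) \<Rightarrow> bool" where
  "has_pyramid V E \<longleftrightarrow> (\<exists>a b1 b2 b3 P1 P2 P3.
     b1 \<noteq> b2 \<and> b1 \<noteq> b3 \<and> b2 \<noteq> b3 \<and> E b1 b2 \<and> E b1 b3 \<and> E b2 b3
     \<and> ind_path V E P1 a b1 \<and> ind_path V E P2 a b2 \<and> ind_path V E P3 a b3
     \<and> set P1 \<inter> set P2 = {a} \<and> set P1 \<inter> set P3 = {a} \<and> set P2 \<inter> set P3 = {a}
     \<and> is_hole V E (set P1 \<union> set P2) \<and> is_hole V E (set P1 \<union> set P3)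
     \<and> is_hole V E (set P2 \<union> set P3))"

definition has_prism :: "'a set \<Rightarrow> ('a \<Rightarrow> 'a \<Rightarrow> bool) \<Rightarrow> bool" where
  "has_prism V E \<longleftrightarrow> (\<exists>a1 a2 a3 b1 b2 b3 P1 P2 P3.
     a1 \<noteq> a2 \<and> a1 \<noteq> a3 \<and> a2 \<noteq> a3 \<and> E a1 a2 \<and> E a1 a3 \<and> E a2 a3
     \<and> b1 \<noteq> b2 \<and> b1 \<noteq> b3 \<and> b2 \<noteq> b3 \<and> E b1 b2 \<and> E b1 b3 \<and> E b2 b3
     \<and> {a1, a2, a3} \<inter> {b1, b2, b3} = {}
     \<and> ind_path V E P1 a1 b1 \<and> ind_path V E P2 a2 b2 \<and> ind_path V E P3 a3 b3
     \<and> set P1 \<inter> set P2 = {} \<and> set P1 \<inter> set P3 = {} \<and> set P2 \<inter> set P3 = {}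
     \<and> is_hole V E (set P1 \<union> set P2) \<and> is_hole V E (set P1 \<union> set P3)
     \<and> is_hole V E (set P2 \<union> set P3))"

definition has_turtle :: "'a set \<Rightarrow> ('a \<Rightarrow> 'a \<Rightarrow> bool) \<Rightarrow> bool" where
  "has_turtle V E \<longleftrightarrow> (\<exists>a1 b1 a2 b2 P1 P2 x y.
     ind_path V E P1 a1 b1 \<and> ind_path V E P2 a2 b2 \<and> set P1 \<inter> set P2 = {}
     \<and> E a1 a2 \<and> E b1 b2 \<and> is_hole V E (set P1 \<union> set P2)
     \<and> x \<in> V \<and> y \<in> V \<and> x \<notin> set P1 \<union> set P2 \<and> y \<notin> set P1 \<union> set P2 \<and> E x y
     \<and> card {v \<in> set P1. E x v} \<ge> 3 \<and> (\<forall>v \<in> set P2. \<not> E x v)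
     \<and> card {v \<in> set P2. E y v} \<ge> 3 \<and> (\<forall>v \<in> set P1. \<not> E y v))"

definition in_class_C :: "'a set \<Rightarrow> ('a \<Rightarrow> 'a \<Rightarrow> bool) \<Rightarrow> bool" where
  "in_class_C V E \<longleftrightarrow> graph V E \<and> \<not> has_theta V E \<and> \<not> has_pyramid V E
     \<and> \<not> has_prism V E \<and> \<not> has_turtle V E"

definition connected_set :: "('a \<Rightarrow> 'a \<Rightarrow> bool) \<Rightarrow> 'a set \<Rightarrow> bool" where
  "connected_set E S \<longleftrightarrow> S \<noteq> {} \<and>
     (\<forall>u\<in>S. \<forall>v\<in>S. (\<lambda>x y. x \<in> S \<and> y \<in> S \<and> E x y)\<^sup>*\<^sup>* u v)"

definition component :: "'a set \<Rightarrow> ('a \<Rightarrow> 'a \<Rightarrow> bool) \<Rightarrow> 'a set \<Rightarrow> 'a set \<Rightarrow> bool" where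
  "component V E X D \<longleftrightarrow> D \<subseteq> V - X \<and> connected_set E D
     \<and> (\<forall>D'. D \<subseteq> D' \<and> D' \<subseteq> V - X \<and> connected_set E D' \<longrightarrow> D' = D)"

definition nbhd :: "'a set \<Rightarrow> ('a \<Rightarrow> 'a \<Rightarrow> bool) \<Rightarrow> 'a set \<Rightarrow> 'a set" where
  "nbhd V E X = {v \<in> V - X. \<exists>u\<in>X. E u v}"

definition minimal_separator :: "'a set \<Rightarrow> ('a \<Rightarrow> 'a \<Rightarrow> bool) \<Rightarrow> 'a set \<Rightarrow> bool" where
  "minimal_separator V E C \<longleftrightarrow> C \<subseteq> V \<and> (\<exists>L R. L \<noteq> R
     \<and> component V E C L \<and> component V E C R \<and> nbhd V E L = C \<and> nbhd V E R = C)"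

definition full_component :: "'a set \<Rightarrow> ('a \<Rightarrow> 'a \<Rightarrow> bool) \<Rightarrow> 'a set \<Rightarrow> 'a set \<Rightarrow> bool" where
  "full_component V E C D \<longleftrightarrow> component V E C D \<and> nbhd V E D = C"

definition is_clique :: "('a \<Rightarrow> 'a \<Rightarrow> bool) \<Rightarrow> 'a set \<Rightarrow> bool" where
  "is_clique E K \<longleftrightarrow> (\<forall>u\<in>K. \<forall>v\<in>K. u \<noteq> v \<longrightarrow> E u v)"

end

theory Submission
  imports Defs
begin

text \<open>Fix two nonadjacent vertices a, b of C. Every full component D contains
  neighbours of both, hence an induced a--b path whose interior lies in D. Distinct
  components are disjoint and anticomplete, so the paths through any two full components
  share only their ends and together induce a hole. Three full components would therefore
  yield a theta; since the two components witnessing minimality are full, there are exactly two.\<close>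

subsection \<open>Consecutive pairs of a list\<close>

fun adj_pairs :: "'a list \<Rightarrow> ('a \<times> 'a) set" where
  "adj_pairs (x # y # zs) = insert (x, y) (adj_pairs (y # zs))"
| "adj_pairs _ = {}"

lemma adj_pairs_Cons:
  "adj_pairs (x # xs) = (if xs = [] then {} else insert (x, hd xs) (adj_pairs xs))"
  by (cases xs) auto

lemma adj_pairs_append:
  "adj_pairs (xs @ ys) = adj_pairs xs \<union> adj_pairs ys
     \<union> (if xs \<noteq> [] \<and> ys \<noteq> [] then {(last xs, hd ys)} else {})"
  by (induction xs) (auto simp: adj_pairs_Cons)

lemma adj_pairs_rev: "adj_pairs (rev xs) = (adj_pairs xs)\<inverse>"
  by (induction xs) (auto simp: adj_pairs_Cons adj_pairs_append hd_rev last_rev)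

lemma adj_pairs_conv_nth:
  "(x, y) \<in> adj_pairs xs \<longleftrightarrow> (\<exists>i. Suc i < length xs \<and> x = xs ! i \<and> y = xs ! Suc i)"
proof (induction xs rule: adj_pairs.induct)
  case (1 a b zs)
  have "(x, y) \<in> adj_pairs (a # b # zs) \<longleftrightarrow>
      (x = a \<and> y = b) \<or> (\<exists>i. Suc i < length (b # zs) \<and> x = (b # zs) ! i \<and> y = (b # zs) ! Suc i)"
    using "1.IH" by auto
  also have "\<dots> \<longleftrightarrow> (\<exists>i. Suc i < length (a # b # zs)
      \<and> x = (a # b # zs) ! i \<and> y = (a # b # zs) ! Suc i)"
    by (auto simp: less_Suc_eq_0_disj)
  finally show ?case .
qed auto

lemma adj_pairs_take: "adj_pairs (take k xs) \<subseteq> adj_pairs xs"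
  and adj_pairs_drop: "adj_pairs (drop k xs) \<subseteq> adj_pairs xs"
  using adj_pairs_append[of "take k xs" "drop k xs"] by auto

lemma adj_pairs_cycle_iff:
  assumes "distinct c" and i: "i < length c" and j: "j < length c"
  shows "(c ! i, c ! j) \<in> adj_pairs (c @ [hd c]) \<longleftrightarrow> j = (i + 1) mod length c"
proof -
  let ?n = "length c"
  have at: "(c @ [hd c]) ! k = c ! k" if "k < ?n" for k
    using that by (simp add: nth_append)
  have at_Suc: "(c @ [hd c]) ! Suc k = c ! (Suc k mod ?n)" if "k < ?n" for k
  proof (cases "Suc k < ?n")
    case False
    then have "Suc k = ?n" using that by auto
    moreover have "c \<noteq> []" using that by auto
    ultimately show ?thesis by (simp add: nth_append hd_conv_nth)
  qed (simp add: nth_append)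
  have "(c ! i, c ! j) \<in> adj_pairs (c @ [hd c]) \<longleftrightarrow>
      (\<exists>k<?n. c ! i = c ! k \<and> c ! j = c ! (Suc k mod ?n))"
    unfolding adj_pairs_conv_nth using at at_Suc by auto
  also have "\<dots> \<longleftrightarrow> j = (i + 1) mod ?n"
  proof -
    have "0 < ?n" using i by linarith
    then have "Suc k mod ?n < ?n" for k by simp
    then show ?thesis using assms by (auto simp: nth_eq_iff_index_eq)
  qed
  finally show ?thesis .
qed

subsection \<open>Walks and induced paths\<close>

definition walk_through :: "('a \<Rightarrow> 'a \<Rightarrow> bool) \<Rightarrow> 'a set \<Rightarrow> 'a \<Rightarrow> 'a \<Rightarrow> 'a list \<Rightarrow> bool" where
  "walk_through E D a b p \<longleftrightarrow> p \<noteq> [] \<and> hd p = a \<and> last p = b \<and> set p \<subseteq> D \<union> {a, b}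
     \<and> (\<forall>(x, y) \<in> adj_pairs p. E x y)"

lemma last_take_conv_nth: "0 < k \<Longrightarrow> k \<le> length p \<Longrightarrow> last (take k p) = p ! (k - 1)"
  by (metis Suc_diff_1 Suc_le_lessD last_snoc take_Suc_conv_app_nth)

lemma walk_through_shortcut:
  assumes w: "walk_through E D a b p" and k: "0 < k" "k \<le> j" "j < length p"
    and e: "E (p ! (k - 1)) (p ! j)"
  shows "walk_through E D a b (take k p @ drop j p)"
proof -
  have ne: "take k p \<noteq> []" "drop j p \<noteq> []" using k by auto
  have "last (take k p) = p ! (k - 1)" using k by (intro last_take_conv_nth) auto
  moreover have "hd (drop j p) = p ! j" using k by (simp add: hd_drop_conv_nth)
  ultimately have "adj_pairs (take k p @ drop j p) \<subseteq> adj_pairs p \<union> {(p ! (k - 1), p ! j)}"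
    using adj_pairs_take[of k p] adj_pairs_drop[of j p] ne by (auto simp: adj_pairs_append)
  moreover have "set (take k p @ drop j p) \<subseteq> set p"
    using set_take_subset set_drop_subset by fastforce
  ultimately show ?thesis using w e k ne unfolding walk_through_def by (auto simp: hd_append)
qed

lemma shortest_walk_is_induced:
  assumes w: "walk_through E D a b p"
    and shortest: "\<And>q. walk_through E D a b q \<Longrightarrow> length p \<le> length q"
    and irrefl: "\<And>u. \<not> E u u" and sym: "\<And>u v. E u v \<Longrightarrow> E v u"
  shows "distinct p"
    and "\<forall>i<length p. \<forall>j<length p. E (p ! i) (p ! j) \<longleftrightarrow> (j = i + 1 \<or> i = j + 1)"
proof -
  have step: "E (p ! i) (p ! Suc i)" if "Suc i < length p" for i
  proof -
    have "(p ! i, p ! Suc i) \<in> adj_pairs p" unfolding adj_pairs_conv_nth using that by blast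
    then show ?thesis using w unfolding walk_through_def by auto
  qed
  show "distinct p"
  proof (rule ccontr)
    assume "\<not> distinct p"
    then obtain i j where ij: "i < j" "j < length p" "p ! i = p ! j"
      by (metis distinct_conv_nth linorder_neqE_nat)
    have "walk_through E D a b (take i p @ drop j p)"
    proof (cases i)
      case 0
      then show ?thesis
        using w ij adj_pairs_drop[of j p] set_drop_subset[of j p] unfolding walk_through_def
        by (auto simp: hd_drop_conv_nth hd_conv_nth)
    next
      case (Suc i')
      then show ?thesis using walk_through_shortcut[OF w, of i j] step[of i'] ij by auto
    qed
    then show False using shortest[of "take i p @ drop j p"] ij by auto
  qed
  have chord_free: "j = i + 1" if "i < j" "j < length p" "E (p ! i) (p ! j)" for i j
  proof (rule ccontr)
    assume "j \<noteq> i + 1"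
    then show False
      using walk_through_shortcut[OF w, of "Suc i" j] shortest[of "take (Suc i) p @ drop j p"] that
      by auto
  qed
  show "\<forall>i<length p. \<forall>j<length p. E (p ! i) (p ! j) \<longleftrightarrow> (j = i + 1 \<or> i = j + 1)"
  proof (intro allI impI iffI)
    fix i j assume "i < length p" "j < length p" "E (p ! i) (p ! j)"
    then show "j = i + 1 \<or> i = j + 1"
      using chord_free[of i j] chord_free[of j i] sym irrefl by (cases i j rule: linorder_cases) auto
  next
    fix i j assume "i < length p" "j < length p" "j = i + 1 \<or> i = j + 1"
    then show "E (p ! i) (p ! j)" using step sym by auto
  qed
qed

lemma rtranclp_restrict_walk:
  assumes "(\<lambda>x y. x \<in> S \<and> y \<in> S \<and> E x y)\<^sup>*\<^sup>* u w" and "u \<in> S"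
  shows "\<exists>p. p \<noteq> [] \<and> hd p = u \<and> last p = w \<and> set p \<subseteq> S \<and> (\<forall>(x, y) \<in> adj_pairs p. E x y)"
  using assms
proof (induction rule: rtranclp_induct)
  case base
  show ?case by (intro exI[of _ "[u]"]) (simp add: \<open>u \<in> S\<close>)
next
  case (step y z)
  then obtain p where "p \<noteq> []" "hd p = u" "last p = y" "set p \<subseteq> S" "\<forall>(x, y) \<in> adj_pairs p. E x y"
    by blast
  with step.hyps(2) show ?case by (intro exI[of _ "p @ [z]"]) (auto simp: adj_pairs_append)
qed

lemma induced_path_through_connected:
  assumes g: "graph V E" and D: "connected_set E D" "D \<subseteq> V"
    and a: "a \<in> V" "u \<in> D" "E u a" and b: "b \<in> V" "w \<in> D" "E w b"
  shows "\<exists>p. ind_path V E p a b \<and> set p \<subseteq> D \<union> {a, b}"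
proof -
  have sym: "\<And>u v. E u v \<Longrightarrow> E v u" and irrefl: "\<And>u. \<not> E u u"
    using g unfolding graph_def by auto
  obtain p where p: "p \<noteq> []" "hd p = u" "last p = w" "set p \<subseteq> D" "\<forall>(x, y) \<in> adj_pairs p. E x y"
    using rtranclp_restrict_walk[of D E u w] D(1) a(2) b(2) unfolding connected_set_def by blast
  have "walk_through E D a b (a # p @ [b])"
    unfolding walk_through_def using p a b sym by (auto simp: adj_pairs_append adj_pairs_Cons)
  then obtain q where q: "walk_through E D a b q"
    and shortest: "\<And>r. walk_through E D a b r \<Longrightarrow> length q \<le> length r"
    using ex_has_least_nat[of "walk_through E D a b" _ length] by blast
  have q_props: "q \<noteq> []" "hd q = a" "last q = b" "set q \<subseteq> D \<union> {a, b}"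
    using q unfolding walk_through_def by auto
  with D(2) a(1) b(1) have "set q \<subseteq> V" by blast
  with q_props have "ind_path V E q a b"
    using shortest_walk_is_induced[OF q shortest irrefl sym] unfolding ind_path_def by simp
  with q_props show ?thesis by blast
qed

lemma ind_path_adj_pairs_edge: "ind_path V E p a b \<Longrightarrow> (x, y) \<in> adj_pairs p \<Longrightarrow> E x y"
  unfolding adj_pairs_conv_nth ind_path_def by auto

lemma ind_path_edge_adj_pairs:
  assumes "ind_path V E p a b" "x \<in> set p" "y \<in> set p" "E x y"
  shows "(x, y) \<in> adj_pairs p \<or> (y, x) \<in> adj_pairs p"
proof -
  obtain i j where "i < length p" "x = p ! i" "j < length p" "y = p ! j"
    using assms(2,3) by (auto simp: in_set_conv_nth)
  moreover from this have "j = i + 1 \<or> i = j + 1"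
    using assms(1,4) unfolding ind_path_def by blast
  ultimately show ?thesis unfolding adj_pairs_conv_nth by auto
qed

lemma ind_path_nonadjacent_ends:
  assumes p: "ind_path V E p a b" and "a \<noteq> b" "\<not> E a b"
  obtains M where "M \<noteq> []" "p = a # M @ [b]"
proof -
  have "p \<noteq> []" "hd p = a" "last p = b" using p unfolding ind_path_def by auto
  then obtain ys where p_eq: "p = a # ys" by (cases p) auto
  with \<open>last p = b\<close> \<open>a \<noteq> b\<close> have ys: "ys \<noteq> []" "last ys = b" by auto
  have "butlast ys \<noteq> []"
  proof
    assume "butlast ys = []"
    then have "p = [a, b]" using p_eq ys by (metis append_butlast_last_id append.left_neutral)
    moreover have "\<forall>i<length p. \<forall>j<length p. E (p ! i) (p ! j) \<longleftrightarrow> (j = i + 1 \<or> i = j + 1)"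
      using p unfolding ind_path_def by blast
    ultimately have "E (p ! 0) (p ! 1)" by (metis One_nat_def add_0 length_Cons lessI list.size(3) zero_less_Suc)
    with \<open>p = [a, b]\<close> \<open>\<not> E a b\<close> show False by simp
  qed
  then show ?thesis using that[of "butlast ys"] p_eq ys by (metis append_butlast_last_id append_Cons)
qed

subsection \<open>Holes\<close>

lemma is_hole_cycle:
  assumes "distinct c" "length c \<ge> 4" "set c \<subseteq> V"
    and edges: "\<forall>x \<in> set c. \<forall>y \<in> set c.
      E x y \<longleftrightarrow> (x, y) \<in> adj_pairs (c @ [hd c]) \<or> (y, x) \<in> adj_pairs (c @ [hd c])"
  shows "is_hole V E (set c)"
  unfolding is_hole_def
proof (intro exI[of _ c] conjI allI impI)
  fix i j assume "i < length c" "j < length c"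
  then show "E (c ! i) (c ! j) \<longleftrightarrow> (j = (i + 1) mod length c \<or> i = (j + 1) mod length c)"
    using edges adj_pairs_cycle_iff[OF assms(1)] by simp
qed (use assms in auto)

lemma adj_pairs_glue_cycle:
  assumes "M \<noteq> []"
  shows "adj_pairs ((a # N @ [b]) @ rev M @ [a]) = adj_pairs (a # N @ [b]) \<union> (adj_pairs (a # M @ [b]))\<inverse>"
proof -
  have "adj_pairs (a # M @ [b]) = adj_pairs (a # M) \<union> {(last M, b)}"
    using adj_pairs_append[of "a # M" "[b]"] assms by simp
  moreover have "adj_pairs ((a # N @ [b]) @ rev (a # M))
      = adj_pairs (a # N @ [b]) \<union> (adj_pairs (a # M))\<inverse> \<union> {(b, last M)}"
    unfolding adj_pairs_append adj_pairs_rev using assms by (simp add: hd_rev)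
  ultimately show ?thesis by auto
qed

lemma is_hole_Un_ind_paths:
  assumes g: "graph V E" and P: "ind_path V E P a b" and Q: "ind_path V E Q a b"
    and ab: "a \<noteq> b" "\<not> E a b" and inter: "set P \<inter> set Q = {a, b}"
    and anticomplete: "\<forall>x \<in> set P - {a, b}. \<forall>y \<in> set Q - {a, b}. \<not> E x y"
  shows "is_hole V E (set P \<union> set Q)"
proof -
  obtain N where N: "N \<noteq> []" "P = a # N @ [b]" using ind_path_nonadjacent_ends[OF P ab] .
  obtain M where M: "M \<noteq> []" "Q = a # M @ [b]" using ind_path_nonadjacent_ends[OF Q ab] .
  define c where "c = P @ rev M"
  have "distinct P" "distinct Q" using P Q unfolding ind_path_def by auto
  then have distinct: "distinct c" using inter M unfolding c_def by auto
  have length: "length c \<ge> 4" using N M unfolding c_def by (cases N; cases M) auto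
  have set_c: "set c = set P \<union> set Q" unfolding c_def using M N by auto
  have subset: "set c \<subseteq> V" using set_c P Q unfolding ind_path_def by auto
  have cycle_pairs: "adj_pairs (c @ [hd c]) = adj_pairs P \<union> (adj_pairs Q)\<inverse>"
    unfolding c_def using adj_pairs_glue_cycle[OF M(1), of a N b] N(2) M(2) by simp
  have sym: "\<And>x y. E x y \<Longrightarrow> E y x" using g unfolding graph_def by blast
  have "E x y \<longleftrightarrow> (x, y) \<in> adj_pairs (c @ [hd c]) \<or> (y, x) \<in> adj_pairs (c @ [hd c])"
    if "x \<in> set c" "y \<in> set c" for x y
  proof
    assume e: "E x y"
    have "x \<in> set P \<and> y \<in> set P \<or> x \<in> set Q \<and> y \<in> set Q"
      using that set_c inter anticomplete e sym by blast
    then show "(x, y) \<in> adj_pairs (c @ [hd c]) \<or> (y, x) \<in> adj_pairs (c @ [hd c])"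
      using ind_path_edge_adj_pairs[OF P _ _ e] ind_path_edge_adj_pairs[OF Q _ _ e]
      unfolding cycle_pairs by blast
  next
    assume "(x, y) \<in> adj_pairs (c @ [hd c]) \<or> (y, x) \<in> adj_pairs (c @ [hd c])"
    then show "E x y"
      using ind_path_adj_pairs_edge[OF P] ind_path_adj_pairs_edge[OF Q] sym
      unfolding cycle_pairs by blast
  qed
  then show ?thesis using is_hole_cycle[OF distinct length subset] set_c by simp
qed

subsection \<open>Components\<close>

lemma connected_set_Un:
  assumes sym: "\<And>u v. E u v \<Longrightarrow> E v u"
    and A: "connected_set E A" and B: "connected_set E B"
    and linked: "A \<inter> B \<noteq> {} \<or> (\<exists>x\<in>A. \<exists>y\<in>B. E x y)"
  shows "connected_set E (A \<union> B)"
proof -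
  define R where "R S = (\<lambda>x y. x \<in> S \<and> y \<in> S \<and> E x y)" for S
  have R_Un: "(R A)\<^sup>*\<^sup>* x y \<Longrightarrow> (R (A \<union> B))\<^sup>*\<^sup>* x y" "(R B)\<^sup>*\<^sup>* x y \<Longrightarrow> (R (A \<union> B))\<^sup>*\<^sup>* x y" for x y
    by (auto simp: R_def elim: rtranclp_mono[THEN predicate2D, rotated])
  have in_A: "(R (A \<union> B))\<^sup>*\<^sup>* u v" if "u \<in> A" "v \<in> A" for u v
    using A R_Un that unfolding connected_set_def R_def by blast
  have in_B: "(R (A \<union> B))\<^sup>*\<^sup>* u v" if "u \<in> B" "v \<in> B" for u v
    using B R_Un that unfolding connected_set_def R_def by blast
  obtain x y where xy: "x \<in> A" "y \<in> B" "(R (A \<union> B))\<^sup>*\<^sup>* x y" "(R (A \<union> B))\<^sup>*\<^sup>* y x"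
  proof (cases "A \<inter> B = {}")
    case True
    then obtain x y where "x \<in> A" "y \<in> B" "E x y" using linked by blast
    with sym show ?thesis using that[of x y] unfolding R_def by blast
  qed (use that in blast)
  have "(R (A \<union> B))\<^sup>*\<^sup>* u v" if "u \<in> A \<union> B" "v \<in> A \<union> B" for u v
    using that in_A[of _ x] in_A[of x] in_B[of _ y] in_B[of y] xy
    by (metis Un_iff rtranclp_trans)
  then show ?thesis using A unfolding connected_set_def R_def by auto
qed

lemma component_maximal:
  "component V E X D \<Longrightarrow> D \<subseteq> D' \<Longrightarrow> D' \<subseteq> V - X \<Longrightarrow> connected_set E D' \<Longrightarrow> D' = D"
  unfolding component_def by blast

lemma components_disjoint_anticomplete:
  assumes g: "graph V E" and D1: "component V E X D1" and D2: "component V E X D2"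
    and "D1 \<noteq> D2"
  shows "D1 \<inter> D2 = {}" and "\<forall>x \<in> D1. \<forall>y \<in> D2. \<not> E x y"
proof -
  have False if linked: "D1 \<inter> D2 \<noteq> {} \<or> (\<exists>x\<in>D1. \<exists>y\<in>D2. E x y)"
  proof -
    have sym: "\<And>u v. E u v \<Longrightarrow> E v u" using g unfolding graph_def by blast
    have "connected_set E D1" "connected_set E D2" "D1 \<subseteq> V - X" "D2 \<subseteq> V - X"
      using D1 D2 unfolding component_def by blast+
    then have "connected_set E (D1 \<union> D2)" "D1 \<union> D2 \<subseteq> V - X"
      using connected_set_Un[OF sym _ _ linked] by auto
    then have "D1 \<union> D2 = D1" "D1 \<union> D2 = D2"
      using component_maximal[OF D1] component_maximal[OF D2] by auto
    then show False using \<open>D1 \<noteq> D2\<close> by blast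
  qed
  then show "D1 \<inter> D2 = {}" and "\<forall>x \<in> D1. \<forall>y \<in> D2. \<not> E x y" by blast+
qed

lemma induced_path_through_full_component:
  assumes g: "graph V E" and D: "full_component V E C D" and "a \<in> C" "b \<in> C"
  shows "\<exists>p. ind_path V E p a b \<and> set p \<subseteq> D \<union> {a, b}"
proof -
  have "component V E C D" and "a \<in> nbhd V E D" "b \<in> nbhd V E D"
    using D assms(3,4) unfolding full_component_def by auto
  then have conn: "connected_set E D" "D \<subseteq> V"
    and "a \<in> V" "\<exists>u\<in>D. E u a" "b \<in> V" "\<exists>w\<in>D. E w b"
    unfolding component_def nbhd_def by auto
  then show ?thesis using induced_path_through_connected[OF g conn] by blast
qed

lemma hole_through_two_components:
  assumes g: "graph V E" and D1: "component V E C D1" and D2: "component V E C D2"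
    and "D1 \<noteq> D2" and ab: "a \<noteq> b" "\<not> E a b"
    and P1: "ind_path V E P1 a b" "set P1 \<subseteq> D1 \<union> {a, b}"
    and P2: "ind_path V E P2 a b" "set P2 \<subseteq> D2 \<union> {a, b}"
  shows "set P1 \<inter> set P2 = {a, b}" and "is_hole V E (set P1 \<union> set P2)"
proof -
  have "a \<in> set P1" "b \<in> set P1" "a \<in> set P2" "b \<in> set P2"
    using P1(1) P2(1) unfolding ind_path_def by (metis hd_in_set last_in_set)+
  then show inter: "set P1 \<inter> set P2 = {a, b}"
    using P1 P2 components_disjoint_anticomplete(1)[OF g D1 D2 \<open>D1 \<noteq> D2\<close>] by blast
  have "\<forall>x \<in> set P1 - {a, b}. \<forall>y \<in> set P2 - {a, b}. \<not> E x y"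
    using P1 P2 components_disjoint_anticomplete(2)[OF g D1 D2 \<open>D1 \<noteq> D2\<close>] by blast
  then show "is_hole V E (set P1 \<union> set P2)"
    using is_hole_Un_ind_paths[OF g P1(1) P2(1) ab inter] by blast
qed

lemma theta_from_three_full_components:
  assumes g: "graph V E" and "a \<in> C" "b \<in> C" "a \<noteq> b" "\<not> E a b"
    and D: "full_component V E C D1" "full_component V E C D2" "full_component V E C D3"
    and "D1 \<noteq> D2" "D1 \<noteq> D3" "D2 \<noteq> D3"
  shows "has_theta V E"
proof -
  obtain P1 P2 P3 where
    P: "ind_path V E P1 a b" "set P1 \<subseteq> D1 \<union> {a, b}"
       "ind_path V E P2 a b" "set P2 \<subseteq> D2 \<union> {a, b}"
       "ind_path V E P3 a b" "set P3 \<subseteq> D3 \<union> {a, b}"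
    using induced_path_through_full_component[OF g D(1)] induced_path_through_full_component[OF g D(2)]
      induced_path_through_full_component[OF g D(3)] \<open>a \<in> C\<close> \<open>b \<in> C\<close> by metis
  have D': "component V E C D1" "component V E C D2" "component V E C D3"
    using D unfolding full_component_def by auto
  note hole = hole_through_two_components[OF g _ _ _ \<open>a \<noteq> b\<close> \<open>\<not> E a b\<close>]
  show ?thesis
    unfolding has_theta_def
    using \<open>a \<noteq> b\<close> \<open>\<not> E a b\<close> P hole[OF D'(1,2) \<open>D1 \<noteq> D2\<close> P(1-4)]
      hole[OF D'(1,3) \<open>D1 \<noteq> D3\<close> P(1,2,5,6)] hole[OF D'(2,3) \<open>D2 \<noteq> D3\<close> P(3-6)]
    by blast
qed

theorem lemma3p2:
  fixes V :: "'a set" and E :: "'a \<Rightarrow> 'a \<Rightarrow> bool" and C :: "'a set"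
  assumes "in_class_C V E"
    and "minimal_separator V E C"
    and "\<not> is_clique E C"
  shows "card {D. full_component V E C D} = 2"
proof -
  have g: "graph V E" and no_theta: "\<not> has_theta V E"
    using assms(1) unfolding in_class_C_def by auto
  obtain L R where "L \<noteq> R" and full: "full_component V E C L" "full_component V E C R"
    using assms(2) unfolding minimal_separator_def full_component_def by blast
  obtain a b where ab: "a \<in> C" "b \<in> C" "a \<noteq> b" "\<not> E a b"
    using assms(3) unfolding is_clique_def by blast
  have "{D. full_component V E C D} = {L, R}"
    using theta_from_three_full_components[OF g ab _ _ _ \<open>L \<noteq> R\<close>] full no_theta by blast
  then show ?thesis using \<open>L \<noteq> R\<close> by simp
qed

end
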